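(* Let $P_t=(T^-_t,T^+_t,N^-_t,N^+_t)^\top$ be the 4-dimensional Hawkes process described in the context, and assume all eigenvalues of $\hat\Phi_0$ have modulus strictly smaller than $1$. Then $$\Lambda:=E(\lambda_t)=(\mathbb I-\hat\Phi_0)^{-1}M .$$ Equivalently, writing $\Lambda=(\Lambda^T,\Lambda^T,\Lambda^N,\Lambda^N)^\top$ and $v=(1,1)^\top$, $$\begin{pmatrix}\Lambda^T\\ \Lambda^T\end{pmatrix}=\mu(\mathbb I+\hat D_0)(\mathbb I-\hat\Phi^N_0)v,\qquad \begin{pmatrix}\Lambda^N\\ \Lambda^N\end{pmatrix}=\mu(\mathbb I+\hat D_0)\hat\Phi^I_0 v,$$ where $\hat D_z=\big((\mathbb I-\hat\Phi^T_z)(\mathbb I-\hat\Phi^N_z)-\hat\Phi^F_z\hat\Phi^I_z\big)^{-1}-\mathbb I$.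
   Context: $P_t$ is a 4-dimensional counting process (multivariate Hawkes process) with conditional intensity $\lambda_t=(\lambda^{T-}_t,\lambda^{T+}_t,\lambda^{N-}_t,\lambda^{N+}_t)^\top$ satisfying $\lambda_t=M+\int_{\mathbb R}\Phi_{t-s}\,dP_s$, where $M=(\mu,\mu,0,0)^\top$, $\mu>0$, and $\Phi_t$ is a $4\times4$ matrix of nonnegative, locally integrable functions supported on $\mathbb R^+$, of block form $\Phi_t=\begin{pmatrix}\Phi^T_t&\Phi^F_t\\ \Phi^I_t&\Phi^N_t\end{pmatrix}$, each $2\times2$ block being $\Phi^?_t=\begin{pmatrix}\phi^{?,s}_t&\phi^{?,c}_t\\ \phi^{?,c}_t&\phi^{?,s}_t\end{pmatrix}$, $?\in\{T,I,N,F\}$. For a function $f$, $\hat f_z=\int e^{-izt}f_t\,dt$, applied entrywise to matrices. $\mathbb I$ is the identity matrix (of size 4 or 2 as appropriate). Under the eigenvalue condition the intensity is stationary; by the symmetry of the kernels $E(\lambda^{T+}_t)=E(\lambda^{T-}_t)=:\Lambda^T$ and $E(\lambda^{N+}_t)=E(\lambda^{N-}_t)=:\Lambda^N$. *)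

theory Defs
  imports "HOL-Probability.Probability" "Jordan_Normal_Form.Gauss_Jordan_Elimination"
    "Jordan_Normal_Form.Char_Poly"
begin

definition blk2 :: "real \<Rightarrow> real \<Rightarrow> real mat" where
  "blk2 s c = mat 2 2 (\<lambda>(i,j). if i = j then s else c)"

text \<open>The 4x4 kernel matrix Phi_t in block form [[Phi^T, Phi^F], [Phi^I, Phi^N]];
  component order (T-, T+, N-, N+) = indices 0,1,2,3.\<close>
definition Phi_mat ::
  "(real \<Rightarrow> real) \<Rightarrow> (real \<Rightarrow> real) \<Rightarrow> (real \<Rightarrow> real) \<Rightarrow> (real \<Rightarrow> real) \<Rightarrow>
   (real \<Rightarrow> real) \<Rightarrow> (real \<Rightarrow> real) \<Rightarrow> (real \<Rightarrow> real) \<Rightarrow> (real \<Rightarrow> real) \<Rightarrow> real \<Rightarrow> real mat" where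
  "Phi_mat Ts Tc Fs Fc Is Ic Ns Nc t =
     four_block_mat (blk2 (Ts t) (Tc t)) (blk2 (Fs t) (Fc t))
                    (blk2 (Is t) (Ic t)) (blk2 (Ns t) (Nc t))"

text \<open>Fourier transform at z = 0, applied entrywise: hat f_0 = integral of f over R.\<close>
definition fhat0 :: "nat \<Rightarrow> (real \<Rightarrow> real mat) \<Rightarrow> real mat" where
  "fhat0 n F = mat n n (\<lambda>(i,j). integral\<^sup>L lborel (\<lambda>t. F t $$ (i,j)))"

text \<open>Conditional intensity lambda_t = M + int_{s<t} Phi_{t-s} dP_s (component i), with the
  counting process given by random counting measures N w j.\<close>
definition hawkes_intensity ::
  "real vec \<Rightarrow> (real \<Rightarrow> real mat) \<Rightarrow> ('w \<Rightarrow> nat \<Rightarrow> real measure) \<Rightarrow> 'w \<Rightarrow> nat \<Rightarrow> real \<Rightarrow> ennreal" where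
  "hawkes_intensity M Phi N w i t =
     ennreal (M $ i) + (\<Sum>j<4. \<integral>\<^sup>+ s\<in>{..<t}. ennreal (Phi (t - s) $$ (i,j)) \<partial>(N w j))"

end

theory Submission
  imports Defs
begin

text \<open>
  Taking expectations in the definition of the intensity at time \<open>0\<close> and using Campbell's
  formula (for a point process of constant mean intensity \<open>\<Lambda>\<^sub>j\<close>, the mean of
  \<open>\<integral> f dN\<^sub>j\<close> is \<open>\<Lambda>\<^sub>j \<integral> f\<close>) turns the intensity equation into the linear system
  \<open>\<Lambda> = M + \<Phi>\<^sub>0 \<Lambda>\<close>, where \<open>\<Phi>\<^sub>0\<close> is the matrix of kernel integrals. Since \<open>1\<close> is not an
  eigenvalue of \<open>\<Phi>\<^sub>0\<close>, the matrix \<open>I - \<Phi>\<^sub>0\<close> is invertible, which gives the first formula.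
  The \<open>2\<times>2\<close> blocks of \<open>\<Phi>\<^sub>0\<close> are all of the form \<open>[[s, c], [c, s]]\<close> and therefore commute.
  Hence \<open>det (I - \<Phi>\<^sub>0)\<close> equals the determinant of the Schur complement
  \<open>(I - \<Phi>\<^sup>T)(I - \<Phi>\<^sup>N) - \<Phi>\<^sup>F \<Phi>\<^sup>I\<close>, and eliminating one block row of the system expresses
  both halves of \<open>\<Lambda>\<close> through its inverse.
\<close>

section \<open>Linear systems with commuting blocks\<close>

lemma vec_eq_uminus_if_add_eq_0:
  fixes a b :: "'a :: ab_group_add vec"
  assumes "a \<in> carrier_vec n" "b \<in> carrier_vec n" "a + b = 0\<^sub>v n"
  shows "a = - b"
proof -
  have "a = (a + b) - b"
    using assms(1,2) by (intro eq_vecI) auto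
  then show ?thesis
    using assms by simp
qed

lemma mult_mat_vec_uminus:
  fixes A :: "'a :: ring mat"
  assumes "A \<in> carrier_mat nr nc" "v \<in> carrier_vec nc"
  shows "A *\<^sub>v (- v) = - (A *\<^sub>v v)"
  using assms by (intro eq_vecI) auto

lemma diff_uminus_vec:
  fixes a b :: "'a :: ab_group_add vec"
  assumes "a \<in> carrier_vec n" "b \<in> carrier_vec n"
  shows "a - - b = a + b"
  using assms by (intro eq_vecI) auto

lemma commuting_block_system:
  fixes A B C D :: "'a :: comm_ring_1 mat"
  assumes carr: "A \<in> carrier_mat n n" "B \<in> carrier_mat n n" "C \<in> carrier_mat n n" "D \<in> carrier_mat n n"
    and vecs: "x \<in> carrier_vec n" "y \<in> carrier_vec n"
    and AC: "A * C = C * A" and AD: "A * D = D * A" and BC: "B * C = C * B" and BD: "B * D = D * B"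
    and row1: "A *\<^sub>v x + B *\<^sub>v y = u" and row2: "C *\<^sub>v x + D *\<^sub>v y = 0\<^sub>v n"
  shows "(A * D - B * C) *\<^sub>v x = D *\<^sub>v u" "(A * D - B * C) *\<^sub>v y = - (C *\<^sub>v u)"
proof -
  have Cx: "C *\<^sub>v x = - (D *\<^sub>v y)"
    using carr vecs row2 by (intro vec_eq_uminus_if_add_eq_0) auto
  have Dy: "D *\<^sub>v y = - (C *\<^sub>v x)"
    using Cx by simp
  have "(A * D - B * C) *\<^sub>v x = D *\<^sub>v (A *\<^sub>v x) - B *\<^sub>v (C *\<^sub>v x)"
    using carr vecs by (simp add: minus_mult_distrib_mat_vec[of _ n n] AD)
  also have "B *\<^sub>v (C *\<^sub>v x) = - (D *\<^sub>v (B *\<^sub>v y))"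
    using carr vecs by (simp add: Cx mult_mat_vec_uminus[of _ n n] BD flip: assoc_mult_mat_vec)
  also have "D *\<^sub>v (A *\<^sub>v x) - \<dots> = D *\<^sub>v (A *\<^sub>v x) + D *\<^sub>v (B *\<^sub>v y)"
    using carr vecs by (intro diff_uminus_vec[of _ n]) auto
  also have "\<dots> = D *\<^sub>v u"
    using carr vecs row1 by (simp flip: mult_add_distrib_mat_vec)
  finally show "(A * D - B * C) *\<^sub>v x = D *\<^sub>v u" .
  have "(A * D - B * C) *\<^sub>v y = A *\<^sub>v (D *\<^sub>v y) - C *\<^sub>v (B *\<^sub>v y)"
    using carr vecs by (simp add: minus_mult_distrib_mat_vec[of _ n n] BC)
  also have "A *\<^sub>v (D *\<^sub>v y) = - (C *\<^sub>v (A *\<^sub>v x))"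
    using carr vecs by (simp add: Dy mult_mat_vec_uminus[of _ n n] AC flip: assoc_mult_mat_vec)
  also have "\<dots> - C *\<^sub>v (B *\<^sub>v y) = - (C *\<^sub>v (A *\<^sub>v x) + C *\<^sub>v (B *\<^sub>v y))"
    using carr vecs by (intro uminus_add_minus_vec[of _ n, symmetric]) auto
  also have "\<dots> = - (C *\<^sub>v u)"
    using carr vecs row1 by (simp flip: mult_add_distrib_mat_vec)
  finally show "(A * D - B * C) *\<^sub>v y = - (C *\<^sub>v u)" .
qed

lemma one_minus_four_block_mat:
  fixes A B C D :: "'a :: ring_1 mat"
  assumes "A \<in> carrier_mat n1 n1" "B \<in> carrier_mat n1 n2" "C \<in> carrier_mat n2 n1" "D \<in> carrier_mat n2 n2"
  shows "1\<^sub>m (n1 + n2) - four_block_mat A B C D = four_block_mat (1\<^sub>m n1 - A) (- B) (- C) (1\<^sub>m n2 - D)"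
  using assms by (intro eq_matI) auto

lemma det_one_minus_neq_0:
  fixes A :: "'a :: field mat"
  assumes "A \<in> carrier_mat n n" "\<not> eigenvalue A 1"
  shows "det (1\<^sub>m n - A) \<noteq> 0"
proof -
  have "char_matrix A 1 = - (1\<^sub>m n - A)"
    using assms(1) unfolding char_matrix_def by (intro eq_matI) auto
  moreover have "1\<^sub>m n - A \<in> carrier_mat n n"
    using assms(1) by (rule minus_carrier_mat)
  ultimately show ?thesis
    using assms det_0_negate[of "1\<^sub>m n - A" n] by (simp add: eigenvalue_det[OF assms(1)])
qed

lemma mat_inverse_exists:
  fixes A :: "'a :: field mat"
  assumes A: "A \<in> carrier_mat n n" and "det A \<noteq> 0"
  obtains B where "mat_inverse A = Some B" "B * A = 1\<^sub>m n" "B \<in> carrier_mat n n"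
proof -
  have "A \<in> Units (ring_mat TYPE('a) n undefined)"
    by (rule det_non_zero_imp_unit[OF assms])
  then have "mat_inverse A \<noteq> None"
    using mat_inverse(1)[OF A, where b = undefined] by blast
  then obtain B where B: "mat_inverse A = Some B"
    by blast
  from mat_inverse(2)[OF A B] B that show thesis
    by blast
qed

lemma solve_left_inverse:
  fixes A B :: "'a :: comm_ring_1 mat"
  assumes BA: "B * A = 1\<^sub>m n" and carr: "A \<in> carrier_mat n n" "B \<in> carrier_mat n n"
    and x: "x \<in> carrier_vec n" and eq: "A *\<^sub>v x = b"
  shows "x = B *\<^sub>v b"
proof -
  have "B *\<^sub>v b = (B * A) *\<^sub>v x"
    unfolding eq[symmetric] by (rule assoc_mult_mat_vec[symmetric, OF carr(2,1) x])
  then show ?thesis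
    using x unfolding BA by simp
qed

lemma mult_mat_vec_smult_assoc:
  fixes A B :: "'a :: field mat"
  assumes "A \<in> carrier_mat n n" "B \<in> carrier_mat n n" "v \<in> carrier_vec n"
  shows "A *\<^sub>v (B *\<^sub>v (c \<cdot>\<^sub>v v)) = c \<cdot>\<^sub>v ((A * B) *\<^sub>v v)"
  using assms by (simp add: mult_mat_vec[of _ n n])

lemma vec_eq_append_vec:
  assumes "v \<in> carrier_vec (n1 + n2)"
  shows "v = vec n1 (\<lambda>i. v $ i) @\<^sub>v vec n2 (\<lambda>i. v $ (i + n1))"
  using assms by (intro eq_vecI) (auto simp: append_vec_def)

lemma commuting_four_block_system:
  fixes A B C D :: "'a :: field mat"
  assumes carr: "A \<in> carrier_mat n n" "B \<in> carrier_mat n n" "C \<in> carrier_mat n n" "D \<in> carrier_mat n n"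
    and AC: "A * C = C * A" and AD: "A * D = D * A" and BC: "B * C = C * B" and BD: "B * D = D * B"
    and CD: "C * D = D * C"
    and det: "det (four_block_mat A B C D) \<noteq> 0"
    and vecs: "x \<in> carrier_vec n" "y \<in> carrier_vec n" "u \<in> carrier_vec n"
    and sys: "four_block_mat A B C D *\<^sub>v (x @\<^sub>v y) = u @\<^sub>v 0\<^sub>v n"
  obtains E where "mat_inverse (A * D - B * C) = Some E" "E \<in> carrier_mat n n"
    "x = E *\<^sub>v (D *\<^sub>v u)" "y = - (E *\<^sub>v (C *\<^sub>v u))"
proof -
  have "(A *\<^sub>v x + B *\<^sub>v y) @\<^sub>v (C *\<^sub>v x + D *\<^sub>v y) = u @\<^sub>v 0\<^sub>v n"
    using sys unfolding four_block_mat_mult_vec[OF carr vecs(1,2)] .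
  moreover have "A *\<^sub>v x + B *\<^sub>v y \<in> carrier_vec n"
    using carr vecs by simp
  ultimately have rows: "A *\<^sub>v x + B *\<^sub>v y = u" "C *\<^sub>v x + D *\<^sub>v y = 0\<^sub>v n"
    using append_vec_eq vecs(3) by blast+
  have S: "A * D - B * C \<in> carrier_mat n n"
    using carr by (intro minus_carrier_mat mult_carrier_mat)
  have "det (A * D - B * C) \<noteq> 0"
    using det det_four_block_mat[OF carr CD] by simp
  then obtain E where E: "mat_inverse (A * D - B * C) = Some E" "E * (A * D - B * C) = 1\<^sub>m n"
    "E \<in> carrier_mat n n"
    by (rule mat_inverse_exists[OF S])
  note solved = commuting_block_system[OF carr vecs(1,2) AC AD BC BD rows]
  show thesis
  proof (rule that[OF E(1,3)])
    show "x = E *\<^sub>v (D *\<^sub>v u)"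
      using solve_left_inverse[OF E(2) S E(3) vecs(1) solved(1)] .
    show "y = - (E *\<^sub>v (C *\<^sub>v u))"
      using solve_left_inverse[OF E(2) S E(3) vecs(2) solved(2)]
      unfolding mult_mat_vec_uminus[OF E(3) mult_mat_vec_carrier[OF carr(3) vecs(3)]] .
  qed
qed

lemma one_minus_mult_mat_vec_eqI:
  fixes A :: "'a :: comm_ring_1 mat"
  assumes A: "A \<in> carrier_mat n n" and x: "x \<in> carrier_vec n" and b: "b \<in> carrier_vec n"
    and eq: "\<And>i. i < n \<Longrightarrow> x $ i = b $ i + (\<Sum>j<n. A $$ (i, j) * x $ j)"
  shows "(1\<^sub>m n - A) *\<^sub>v x = b"
proof -
  have "(1\<^sub>m n - A) *\<^sub>v x = x - A *\<^sub>v x"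
    using A x by (simp add: minus_mult_distrib_mat_vec[of _ n n])
  also have "\<dots> = b"
  proof (rule eq_vecI)
    fix i
    assume "i < dim_vec b"
    then have i: "i < n"
      using b by simp
    have "(A *\<^sub>v x) $ i = (\<Sum>j<n. A $$ (i, j) * x $ j)"
      using A x i by (auto simp: scalar_prod_def lessThan_atLeast0 intro: sum.cong)
    then show "(x - A *\<^sub>v x) $ i = b $ i"
      using A x i eq[OF i] by simp
  qed (use A x b in simp)
  finally show ?thesis .
qed

section \<open>Symmetric \<open>2\<times>2\<close> blocks\<close>

lemma blk2_carrier_mat [simp]: "blk2 s c \<in> carrier_mat 2 2"
  by (simp add: blk2_def)

lemma blk2_mult: "blk2 a b * blk2 c d = blk2 (a * c + b * d) (a * d + b * c)"
  by (rule eq_matI) (auto simp: blk2_def scalar_prod_def less_2_cases_iff eval_nat_numeral)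

lemma blk2_mult_commute: "blk2 a b * blk2 c d = blk2 c d * blk2 a b"
  by (simp add: blk2_mult algebra_simps)

lemma one_mat_2_eq_blk2: "1\<^sub>m 2 = blk2 1 0"
  by (rule eq_matI) (auto simp: blk2_def)

lemma blk2_diff: "blk2 a b - blk2 c d = blk2 (a - c) (b - d)"
  by (rule eq_matI) (auto simp: blk2_def)

lemma uminus_blk2: "- blk2 a b = blk2 (- a) (- b)"
  by (rule eq_matI) (auto simp: blk2_def)

lemma fhat0_blk2: "fhat0 2 (\<lambda>t. blk2 (f t) (g t)) = blk2 (integral\<^sup>L lborel f) (integral\<^sup>L lborel g)"
  by (rule eq_matI) (auto simp: fhat0_def blk2_def)

lemma fhat0_four_block_mat:
  assumes "\<And>t. A t \<in> carrier_mat n n" "\<And>t. B t \<in> carrier_mat n n"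
    "\<And>t. C t \<in> carrier_mat n n" "\<And>t. D t \<in> carrier_mat n n"
  shows "fhat0 (n + n) (\<lambda>t. four_block_mat (A t) (B t) (C t) (D t)) =
    four_block_mat (fhat0 n A) (fhat0 n B) (fhat0 n C) (fhat0 n D)"
  using assms[THEN carrier_matD(1)] assms[THEN carrier_matD(2)]
  by (intro eq_matI) (auto simp: fhat0_def)

lemma fhat0_Phi_mat:
  "fhat0 4 (Phi_mat Ts Tc Fs Fc Is Ic Ns Nc) =
     four_block_mat (fhat0 2 (\<lambda>t. blk2 (Ts t) (Tc t))) (fhat0 2 (\<lambda>t. blk2 (Fs t) (Fc t)))
                    (fhat0 2 (\<lambda>t. blk2 (Is t) (Ic t))) (fhat0 2 (\<lambda>t. blk2 (Ns t) (Nc t)))"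
  using fhat0_four_block_mat[of "\<lambda>t. blk2 (Ts t) (Tc t)" 2 "\<lambda>t. blk2 (Fs t) (Fc t)"
      "\<lambda>t. blk2 (Is t) (Ic t)" "\<lambda>t. blk2 (Ns t) (Nc t)"]
  by (simp add: Phi_mat_def[abs_def])

lemma Phi_mat_entry_mem_kernels:
  assumes "i < 4" "j < 4"
  shows "(\<lambda>t. Phi_mat Ts Tc Fs Fc Is Ic Ns Nc t $$ (i, j)) \<in> {Ts, Tc, Fs, Fc, Is, Ic, Ns, Nc}"
  using assms by (auto simp: Phi_mat_def blk2_def less_2_cases_iff numeral_eq_Suc less_Suc_eq)

lemma index_fhat0: "i < n \<Longrightarrow> j < n \<Longrightarrow> fhat0 n F $$ (i, j) = integral\<^sup>L lborel (\<lambda>t. F t $$ (i, j))"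
  by (simp add: fhat0_def)

lemma one_minus_four_block_blk2:
  "1\<^sub>m 4 - four_block_mat (blk2 tS tC) (blk2 fS fC) (blk2 iS iC) (blk2 nS nC) =
    four_block_mat (blk2 (1 - tS) (- tC)) (blk2 (- fS) (- fC)) (blk2 (- iS) (- iC)) (blk2 (1 - nS) (- nC))"
  using one_minus_four_block_mat[of "blk2 tS tC" 2 "blk2 fS fC" 2 "blk2 iS iC" "blk2 nS nC"]
  by (simp add: one_mat_2_eq_blk2 blk2_diff uminus_blk2)

lemma four_block_blk2_carrier_mat: "four_block_mat (blk2 a b) (blk2 c d) (blk2 e f) (blk2 g h) \<in> carrier_mat 4 4"
  using four_block_carrier_mat[OF blk2_carrier_mat blk2_carrier_mat] by simp

lemma blk2_block_mean_solution:
  fixes tS tC fS fC iS iC nS nC \<mu> :: real and Lam :: "real vec"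
  defines "T \<equiv> blk2 tS tC" and "F \<equiv> blk2 fS fC" and "I \<equiv> blk2 iS iC" and "N \<equiv> blk2 nS nC"
    and "M \<equiv> vec 4 (\<lambda>i. if i < 2 then \<mu> else 0)" and "v \<equiv> vec 2 (\<lambda>_. 1)"
  assumes det: "det (1\<^sub>m 4 - four_block_mat T F I N) \<noteq> 0" and Lam: "Lam \<in> carrier_vec 4"
    and mean: "(1\<^sub>m 4 - four_block_mat T F I N) *\<^sub>v Lam = M"
  obtains B C where "mat_inverse (1\<^sub>m 4 - four_block_mat T F I N) = Some B" "Lam = B *\<^sub>v M"
    "mat_inverse ((1\<^sub>m 2 - T) * (1\<^sub>m 2 - N) - F * I) = Some C" "C \<in> carrier_mat 2 2"
    "vec 2 (\<lambda>i. Lam $ i) = \<mu> \<cdot>\<^sub>v ((C * (1\<^sub>m 2 - N)) *\<^sub>v v)"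
    "vec 2 (\<lambda>i. Lam $ (i + 2)) = \<mu> \<cdot>\<^sub>v ((C * I) *\<^sub>v v)"
proof -
  let ?A = "blk2 (1 - tS) (- tC)" and ?B = "blk2 (- fS) (- fC)"
    and ?C = "blk2 (- iS) (- iC)" and ?D = "blk2 (1 - nS) (- nC)"
  have blocks: "1\<^sub>m 4 - four_block_mat T F I N = four_block_mat ?A ?B ?C ?D"
    unfolding T_def F_def I_def N_def by (rule one_minus_four_block_blk2)
  have carr: "1\<^sub>m 4 - four_block_mat T F I N \<in> carrier_mat 4 4"
    unfolding blocks by (rule four_block_blk2_carrier_mat)
  obtain B where B: "mat_inverse (1\<^sub>m 4 - four_block_mat T F I N) = Some B"
    "B * (1\<^sub>m 4 - four_block_mat T F I N) = 1\<^sub>m 4" "B \<in> carrier_mat 4 4"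
    by (rule mat_inverse_exists[OF carr det])
  let ?x = "vec 2 (\<lambda>i. Lam $ i)" and ?y = "vec 2 (\<lambda>i. Lam $ (i + 2))"
  have "Lam = ?x @\<^sub>v ?y"
    using vec_eq_append_vec[of Lam 2 2] Lam by simp
  moreover have "M = (\<mu> \<cdot>\<^sub>v v) @\<^sub>v 0\<^sub>v 2"
    unfolding M_def v_def by (intro eq_vecI) auto
  ultimately have sys: "four_block_mat ?A ?B ?C ?D *\<^sub>v (?x @\<^sub>v ?y) = (\<mu> \<cdot>\<^sub>v v) @\<^sub>v 0\<^sub>v 2"
    using mean unfolding blocks by simp
  have S: "(1\<^sub>m 2 - T) * (1\<^sub>m 2 - N) - F * I = ?A * ?D - ?B * ?C"
    by (simp add: T_def F_def I_def N_def one_mat_2_eq_blk2 blk2_diff blk2_mult)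
  obtain C where C: "mat_inverse (?A * ?D - ?B * ?C) = Some C" "C \<in> carrier_mat 2 2"
    "?x = C *\<^sub>v (?D *\<^sub>v (\<mu> \<cdot>\<^sub>v v))" "?y = - (C *\<^sub>v (?C *\<^sub>v (\<mu> \<cdot>\<^sub>v v)))"
    by (rule commuting_four_block_system[of ?A 2 ?B ?C ?D ?x ?y "\<mu> \<cdot>\<^sub>v v"])
      (use det sys in \<open>simp_all add: blocks blk2_mult_commute v_def\<close>)
  have v: "\<mu> \<cdot>\<^sub>v v \<in> carrier_vec 2" and N: "1\<^sub>m 2 - N \<in> carrier_mat 2 2"
    by (simp_all add: v_def N_def minus_carrier_mat)
  have "?D = 1\<^sub>m 2 - N" "?C = - I"
    by (simp_all add: N_def I_def one_mat_2_eq_blk2 blk2_diff uminus_blk2)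
  moreover have "(- I) *\<^sub>v (\<mu> \<cdot>\<^sub>v v) = - (I *\<^sub>v (\<mu> \<cdot>\<^sub>v v))"
    using v by (intro uminus_mult_mat_vec) (simp add: I_def blk2_def)
  moreover have "I *\<^sub>v (\<mu> \<cdot>\<^sub>v v) \<in> carrier_vec 2"
    unfolding I_def by (rule mult_mat_vec_carrier[OF blk2_carrier_mat v])
  ultimately have "?x = C *\<^sub>v ((1\<^sub>m 2 - N) *\<^sub>v (\<mu> \<cdot>\<^sub>v v))" "?y = C *\<^sub>v (I *\<^sub>v (\<mu> \<cdot>\<^sub>v v))"
    using C(3,4) mult_mat_vec_uminus[OF C(2)] by simp_all
  then have "?x = \<mu> \<cdot>\<^sub>v ((C * (1\<^sub>m 2 - N)) *\<^sub>v v)" "?y = \<mu> \<cdot>\<^sub>v ((C * I) *\<^sub>v v)"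
    using C(2) N by (simp_all add: mult_mat_vec_smult_assoc I_def v_def)
  with B C(1,2) S solve_left_inverse[OF B(2) carr B(3) Lam mean] show thesis
    by (intro that) simp_all
qed

section \<open>First moments of random measures\<close>

lemma campbell_nn_integral:
  fixes Pr :: "'w measure" and Nj :: "'w \<Rightarrow> real measure" and L :: ennreal
  assumes sets: "\<And>w. sets (Nj w) = sets borel"
    and meas: "\<And>A. A \<in> sets borel \<Longrightarrow> (\<lambda>w. emeasure (Nj w) A) \<in> borel_measurable Pr"
    and mean: "\<And>A. A \<in> sets borel \<Longrightarrow> (\<integral>\<^sup>+ w. emeasure (Nj w) A \<partial>Pr) = L * emeasure lborel A"
    and f: "f \<in> borel_measurable borel"
  shows "(\<lambda>w. \<integral>\<^sup>+ s. f s \<partial>Nj w) \<in> borel_measurable Pr \<and>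
         (\<integral>\<^sup>+ w. (\<integral>\<^sup>+ s. f s \<partial>Nj w) \<partial>Pr) = L * (\<integral>\<^sup>+ s. f s \<partial>lborel)"
proof -
  have measurable_Nj: "borel_measurable (Nj w) = borel_measurable borel" for w
    by (rule measurable_cong_sets[OF sets refl])
  show ?thesis
    using f
  proof (induction rule: borel_measurable_induct)
    case (cong f g)
    then have "f = g" by auto
    with cong show ?case by simp
  next
    case (set A)
    then show ?case
      using meas[OF set] mean[OF set] sets by (simp add: nn_integral_indicator)
  next
    case (mult u c)
    have "(\<integral>\<^sup>+ s. c * u s \<partial>Nj w) = c * (\<integral>\<^sup>+ s. u s \<partial>Nj w)" for w
      using mult(2) by (intro nn_integral_cmult) (simp add: measurable_Nj)
    moreover have "(\<integral>\<^sup>+ s. c * u s \<partial>lborel) = c * (\<integral>\<^sup>+ s. u s \<partial>lborel)"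
      using mult(2) by (intro nn_integral_cmult) simp
    ultimately show ?case
      using mult(4) by (auto simp: nn_integral_cmult ac_simps)
  next
    case (add u v)
    have "(\<integral>\<^sup>+ s. v s + u s \<partial>Nj w) = (\<integral>\<^sup>+ s. v s \<partial>Nj w) + (\<integral>\<^sup>+ s. u s \<partial>Nj w)" for w
      using add(1,3) by (intro nn_integral_add) (simp_all add: measurable_Nj)
    moreover have "(\<integral>\<^sup>+ s. v s + u s \<partial>lborel) = (\<integral>\<^sup>+ s. v s \<partial>lborel) + (\<integral>\<^sup>+ s. u s \<partial>lborel)"
      using add(1,3) by (intro nn_integral_add) simp_all
    ultimately show ?case
      using add(6,7) by (auto simp: nn_integral_add distrib_left)
  next
    case (seq U)
    have meas_U: "(\<lambda>w. \<integral>\<^sup>+ s. U i s \<partial>Nj w) \<in> borel_measurable Pr" for i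
      using seq(5) by blast
    have "(\<integral>\<^sup>+ s. (SUP i. U i) s \<partial>Nj w) = (SUP i. \<integral>\<^sup>+ s. U i s \<partial>Nj w)" for w
      using seq(1,3) unfolding SUP_apply
      by (intro nn_integral_monotone_convergence_SUP) (simp_all add: measurable_Nj)
    moreover have "(\<integral>\<^sup>+ s. (SUP i. U i) s \<partial>lborel) = (SUP i. \<integral>\<^sup>+ s. U i s \<partial>lborel)"
      using seq(1,3) unfolding SUP_apply by (intro nn_integral_monotone_convergence_SUP) simp_all
    moreover have "incseq (\<lambda>i w. \<integral>\<^sup>+ s. U i s \<partial>Nj w)"
      using seq(3) unfolding incseq_def le_fun_def by (auto intro!: nn_integral_mono)
    ultimately show ?case
      using seq(5) meas_U
      by (simp add: nn_integral_monotone_convergence_SUP SUP_mult_left_ennreal borel_measurable_SUP)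
  qed
qed

lemma nn_integral_stationary_intensity:
  fixes Pr :: "'w measure" and lam :: "'w \<Rightarrow> real \<Rightarrow> ennreal"
  assumes "sigma_finite_measure Pr"
    and lam: "(\<lambda>(w, t). lam w t) \<in> borel_measurable (Pr \<Otimes>\<^sub>M lborel)"
    and stationary: "\<And>t. (\<integral>\<^sup>+ w. lam w t \<partial>Pr) = L"
    and A: "A \<in> sets borel"
  shows "(\<integral>\<^sup>+ w. (\<integral>\<^sup>+ t\<in>A. lam w t \<partial>lborel) \<partial>Pr) = L * emeasure lborel A"
proof -
  interpret pair_sigma_finite Pr lborel
    using assms(1) by (simp add: pair_sigma_finite_def lborel.sigma_finite_measure_axioms)
  let ?g = "\<lambda>(w, t). lam w t * indicator A t"
  have g: "?g \<in> borel_measurable (Pr \<Otimes>\<^sub>M lborel)"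
    using lam A by measurable
  have lam_t: "(\<lambda>w. lam w t) \<in> borel_measurable Pr" for t
    using measurable_compose[OF measurable_Pair2'[of t lborel Pr] lam] by simp
  have "(\<integral>\<^sup>+ w. (\<integral>\<^sup>+ t\<in>A. lam w t \<partial>lborel) \<partial>Pr) = (\<integral>\<^sup>+ t. (\<integral>\<^sup>+ w. lam w t * indicator A t \<partial>Pr) \<partial>lborel)"
    using lborel.nn_integral_fst[OF g] nn_integral_snd[OF g] by simp
  also have "\<dots> = (\<integral>\<^sup>+ t. L * indicator A t \<partial>lborel)"
    using lam_t by (simp add: nn_integral_multc stationary)
  also have "\<dots> = L * emeasure lborel A"
    using A by (simp add: nn_integral_cmult_indicator)
  finally show ?thesis .
qed

lemma nn_integral_reflected_causal_kernel:
  fixes g :: "real \<Rightarrow> real"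
  assumes g: "g \<in> borel_measurable borel" "\<And>t. 0 \<le> g t" "\<And>t. t < 0 \<Longrightarrow> g t = 0" "integrable lborel g"
  shows "(\<integral>\<^sup>+ s\<in>{..<0}. ennreal (g (- s)) \<partial>lborel) = ennreal (integral\<^sup>L lborel g)"
proof -
  let ?F = "\<lambda>t. ennreal (g t) * indicator {0<..} t"
  have "(\<integral>\<^sup>+ s\<in>{..<0}. ennreal (g (- s)) \<partial>lborel) = (\<integral>\<^sup>+ s. ?F (- s) \<partial>lborel)"
    by (intro nn_integral_cong) (auto simp: indicator_def)
  also have "\<dots> = (\<integral>\<^sup>+ s. ?F s \<partial>distr lborel borel uminus)"
    using g(1) by (subst nn_integral_distr) auto
  also have "\<dots> = (\<integral>\<^sup>+ s. ?F s \<partial>lborel)"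
    by (simp only: lborel_distr_uminus)
  also have "\<dots> = (\<integral>\<^sup>+ s. ennreal (g s) \<partial>lborel)"
    by (intro nn_integral_cong_AE eventually_mono[OF AE_lborel_singleton[of 0]])
       (auto simp: indicator_def g(3) not_less_iff_gr_or_eq)
  also have "\<dots> = ennreal (integral\<^sup>L lborel g)"
    using g by (intro nn_integral_eq_integral) auto
  finally show ?thesis .
qed

lemma expected_past_excitation:
  fixes Pr :: "'w measure" and Nj :: "'w \<Rightarrow> real measure" and g :: "real \<Rightarrow> real"
  assumes sets: "\<And>w. sets (Nj w) = sets borel"
    and meas: "\<And>A. A \<in> sets borel \<Longrightarrow> (\<lambda>w. emeasure (Nj w) A) \<in> borel_measurable Pr"
    and mean: "\<And>A. A \<in> sets borel \<Longrightarrow> (\<integral>\<^sup>+ w. emeasure (Nj w) A \<partial>Pr) = L * emeasure lborel A"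
    and g: "g \<in> borel_measurable borel" "\<And>t. 0 \<le> g t" "\<And>t. t < 0 \<Longrightarrow> g t = 0" "integrable lborel g"
  shows "(\<lambda>w. \<integral>\<^sup>+ s\<in>{..<0}. ennreal (g (- s)) \<partial>Nj w) \<in> borel_measurable Pr \<and>
         (\<integral>\<^sup>+ w. (\<integral>\<^sup>+ s\<in>{..<0}. ennreal (g (- s)) \<partial>Nj w) \<partial>Pr) = L * ennreal (integral\<^sup>L lborel g)"
proof -
  have f: "(\<lambda>s. ennreal (g (- s)) * indicator {..<0} s) \<in> borel_measurable borel"
    using g(1) by measurable
  have "(\<lambda>w. \<integral>\<^sup>+ s\<in>{..<0}. ennreal (g (- s)) \<partial>Nj w) \<in> borel_measurable Pr \<and>
      (\<integral>\<^sup>+ w. (\<integral>\<^sup>+ s\<in>{..<0}. ennreal (g (- s)) \<partial>Nj w) \<partial>Pr) =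
        L * (\<integral>\<^sup>+ s\<in>{..<0}. ennreal (g (- s)) \<partial>lborel)"
    using sets meas mean f by (rule campbell_nn_integral)
  then show ?thesis
    by (simp only: nn_integral_reflected_causal_kernel[OF g])
qed

section \<open>Stationary Hawkes processes\<close>

lemma real_equation_of_ennreal:
  fixes x b :: real and y a :: "'i \<Rightarrow> real"
  assumes "0 \<le> x" "0 \<le> b" "\<And>j. j \<in> J \<Longrightarrow> 0 \<le> y j" "\<And>j. j \<in> J \<Longrightarrow> 0 \<le> a j"
    and eq: "ennreal x = ennreal b + (\<Sum>j\<in>J. ennreal (a j) * ennreal (y j))"
  shows "x = b + (\<Sum>j\<in>J. a j * y j)"
proof -
  have S: "0 \<le> (\<Sum>j\<in>J. a j * y j)"
    using assms by (intro sum_nonneg mult_nonneg_nonneg) auto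
  have "ennreal x = ennreal (b + (\<Sum>j\<in>J. a j * y j))"
    using eq assms S by (simp add: ennreal_mult[symmetric])
  then show ?thesis
    using assms(1,2) S by (simp del: ennreal_plus)
qed

locale stationary_hawkes =
  fixes Pr :: "'w measure" and N :: "'w \<Rightarrow> nat \<Rightarrow> real measure"
    and M :: "real vec" and Phi :: "real \<Rightarrow> real mat"
  assumes prob: "prob_space Pr"
    and M_carrier: "M \<in> carrier_vec 4" and M_nonneg: "\<And>i. i < 4 \<Longrightarrow> 0 \<le> M $ i"
    and kernel_measurable: "\<And>i j. i < 4 \<Longrightarrow> j < 4 \<Longrightarrow> (\<lambda>t. Phi t $$ (i, j)) \<in> borel_measurable borel"
    and kernel_nonneg: "\<And>i j t. i < 4 \<Longrightarrow> j < 4 \<Longrightarrow> 0 \<le> Phi t $$ (i, j)"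
    and kernel_causal: "\<And>i j t. i < 4 \<Longrightarrow> j < 4 \<Longrightarrow> t < 0 \<Longrightarrow> Phi t $$ (i, j) = 0"
    and kernel_integrable: "\<And>i j. i < 4 \<Longrightarrow> j < 4 \<Longrightarrow> integrable lborel (\<lambda>t. Phi t $$ (i, j))"
    and N_sets: "\<And>w j. j < 4 \<Longrightarrow> sets (N w j) = sets borel"
    and N_measurable: "\<And>j A. j < 4 \<Longrightarrow> A \<in> sets borel \<Longrightarrow> (\<lambda>w. emeasure (N w j) A) \<in> borel_measurable Pr"
    and intensity_measurable: "\<And>j. j < 4 \<Longrightarrow>
      (\<lambda>(w, t). hawkes_intensity M Phi N w j t) \<in> borel_measurable (Pr \<Otimes>\<^sub>M lborel)"
    and intensity: "\<And>j A. j < 4 \<Longrightarrow> A \<in> sets borel \<Longrightarrow>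
      (\<integral>\<^sup>+ w. emeasure (N w j) A \<partial>Pr) = (\<integral>\<^sup>+ w. (\<integral>\<^sup>+ t\<in>A. hawkes_intensity M Phi N w j t \<partial>lborel) \<partial>Pr)"
    and stationary: "\<And>j t. j < 4 \<Longrightarrow>
      (\<integral>\<^sup>+ w. hawkes_intensity M Phi N w j t \<partial>Pr) = (\<integral>\<^sup>+ w. hawkes_intensity M Phi N w j 0 \<partial>Pr)"
    and finite_mean: "\<And>j. j < 4 \<Longrightarrow> (\<integral>\<^sup>+ w. hawkes_intensity M Phi N w j 0 \<partial>Pr) < \<infinity>"
begin

abbreviation lam :: "'w \<Rightarrow> nat \<Rightarrow> real \<Rightarrow> ennreal" where
  "lam \<equiv> hawkes_intensity M Phi N"

definition mean_intensity :: "real vec" where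
  "mean_intensity = vec 4 (\<lambda>i. enn2real (\<integral>\<^sup>+ w. lam w i 0 \<partial>Pr))"

lemma expected_emeasure:
  assumes "j < 4" "A \<in> sets borel"
  shows "(\<integral>\<^sup>+ w. emeasure (N w j) A \<partial>Pr) = (\<integral>\<^sup>+ w. lam w j 0 \<partial>Pr) * emeasure lborel A"
  using intensity[OF assms] nn_integral_stationary_intensity[OF prob_space_imp_sigma_finite[OF prob]
      intensity_measurable[OF assms(1)] stationary[OF assms(1)] assms(2)]
  by simp

lemma expected_intensity_equation:
  assumes i: "i < 4"
  shows "(\<integral>\<^sup>+ w. lam w i 0 \<partial>Pr) =
    ennreal (M $ i) + (\<Sum>j<4. ennreal (fhat0 4 Phi $$ (i, j)) * (\<integral>\<^sup>+ w. lam w j 0 \<partial>Pr))"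
proof -
  interpret prob_space Pr by (rule prob)
  let ?X = "\<lambda>j w. \<integral>\<^sup>+ s\<in>{..<0}. ennreal (Phi (- s) $$ (i, j)) \<partial>N w j"
  have X: "?X j \<in> borel_measurable Pr \<and>
      (\<integral>\<^sup>+ w. ?X j w \<partial>Pr) = (\<integral>\<^sup>+ w. lam w j 0 \<partial>Pr) * ennreal (fhat0 4 Phi $$ (i, j))"
    if j: "j < 4" for j
    unfolding index_fhat0[OF i j]
    using N_sets[OF j] N_measurable[OF j] expected_emeasure[OF j] kernel_measurable[OF i j]
      kernel_nonneg[OF i j] kernel_causal[OF i j] kernel_integrable[OF i j]
    by (rule expected_past_excitation)
  have "(\<integral>\<^sup>+ w. lam w i 0 \<partial>Pr) = (\<integral>\<^sup>+ w. ennreal (M $ i) + (\<Sum>j<4. ?X j w) \<partial>Pr)"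
    unfolding hawkes_intensity_def by simp
  also have "\<dots> = (\<integral>\<^sup>+ w. ennreal (M $ i) \<partial>Pr) + (\<integral>\<^sup>+ w. (\<Sum>j<4. ?X j w) \<partial>Pr)"
    using X by (intro nn_integral_add borel_measurable_sum) auto
  also have "(\<integral>\<^sup>+ w. (\<Sum>j<4. ?X j w) \<partial>Pr) = (\<Sum>j<4. \<integral>\<^sup>+ w. ?X j w \<partial>Pr)"
    using X by (intro nn_integral_sum) auto
  also have "\<dots> = (\<Sum>j<4. ennreal (fhat0 4 Phi $$ (i, j)) * (\<integral>\<^sup>+ w. lam w j 0 \<partial>Pr))"
    using X by (intro sum.cong) (auto simp: mult.commute)
  finally show ?thesis
    by (simp add: emeasure_space_1)
qed

lemma mean_intensity_equation: "(1\<^sub>m 4 - fhat0 4 Phi) *\<^sub>v mean_intensity = M"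
proof (rule one_minus_mult_mat_vec_eqI)
  show "fhat0 4 Phi \<in> carrier_mat 4 4" "mean_intensity \<in> carrier_vec 4"
    by (simp_all add: fhat0_def mean_intensity_def)
  fix i :: nat
  assume i: "i < 4"
  have mean: "(\<integral>\<^sup>+ w. lam w j 0 \<partial>Pr) = ennreal (mean_intensity $ j)" if "j < 4" for j
    using finite_mean[OF that] that by (simp add: mean_intensity_def)
  have "ennreal (mean_intensity $ i) =
      ennreal (M $ i) + (\<Sum>j<4. ennreal (fhat0 4 Phi $$ (i, j)) * ennreal (mean_intensity $ j))"
    using expected_intensity_equation[OF i] mean by (simp add: i)
  then show "mean_intensity $ i = M $ i + (\<Sum>j<4. fhat0 4 Phi $$ (i, j) * mean_intensity $ j)"
    using M_nonneg[OF i] kernel_nonneg i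
    by (intro real_equation_of_ennreal) (auto simp: mean_intensity_def index_fhat0 integral_nonneg_AE)
qed (rule M_carrier)

end

lemma stationary_hawkes_Phi_mat:
  fixes Pr :: "'w measure" and N :: "'w \<Rightarrow> nat \<Rightarrow> real measure" and \<mu> :: real
    and Ts Tc Fs Fc Is Ic Ns Nc :: "real \<Rightarrow> real"
  defines "M \<equiv> vec 4 (\<lambda>i. if i < 2 then \<mu> else 0)" and "Phi \<equiv> Phi_mat Ts Tc Fs Fc Is Ic Ns Nc"
  assumes prob: "prob_space Pr" and mu_pos: "\<mu> > 0"
    and kernels: "\<forall>f \<in> {Ts, Tc, Fs, Fc, Is, Ic, Ns, Nc}.
        f \<in> borel_measurable borel \<and> (\<forall>t. 0 \<le> f t) \<and> (\<forall>t < 0. f t = 0) \<and> integrable lborel f"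
    and N_sets: "\<forall>w j. j < 4 \<longrightarrow> sets (N w j) = sets borel"
    and N_meas: "\<forall>j < 4. \<forall>A \<in> sets borel. (\<lambda>w. emeasure (N w j) A) \<in> borel_measurable Pr"
    and lam_meas: "\<forall>i < 4. (\<lambda>(w, t). hawkes_intensity M Phi N w i t) \<in> borel_measurable (Pr \<Otimes>\<^sub>M lborel)"
    and intensity: "\<forall>i < 4. \<forall>A \<in> sets borel. (\<integral>\<^sup>+ w. emeasure (N w i) A \<partial>Pr) =
        (\<integral>\<^sup>+ w. (\<integral>\<^sup>+ t\<in>A. hawkes_intensity M Phi N w i t \<partial>lborel) \<partial>Pr)"
    and stationary: "\<forall>i < 4. \<forall>t.
        (\<integral>\<^sup>+ w. hawkes_intensity M Phi N w i t \<partial>Pr) = (\<integral>\<^sup>+ w. hawkes_intensity M Phi N w i 0 \<partial>Pr)"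
    and finite_mean: "\<forall>i < 4. (\<integral>\<^sup>+ w. hawkes_intensity M Phi N w i 0 \<partial>Pr) < \<infinity>"
  shows "stationary_hawkes Pr N M Phi"
proof (rule stationary_hawkes.intro)
  fix i j :: nat and t :: real
  assume i: "i < 4" and j: "j < 4"
  show "0 \<le> M $ i"
    using i mu_pos by (simp add: M_def)
  have "(\<lambda>t. Phi t $$ (i, j)) \<in> {Ts, Tc, Fs, Fc, Is, Ic, Ns, Nc}"
    unfolding Phi_def by (rule Phi_mat_entry_mem_kernels[OF i j])
  from bspec[OF kernels this]
  show "(\<lambda>t. Phi t $$ (i, j)) \<in> borel_measurable borel" "0 \<le> Phi t $$ (i, j)"
    "integrable lborel (\<lambda>t. Phi t $$ (i, j))" "t < 0 \<Longrightarrow> Phi t $$ (i, j) = 0"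
    by blast+
next
  fix j :: nat and w :: 'w and t :: real and A :: "real set"
  assume j: "j < 4"
  show "sets (N w j) = sets borel"
    using N_sets j by blast
  show "A \<in> sets borel \<Longrightarrow> (\<lambda>w. emeasure (N w j) A) \<in> borel_measurable Pr"
    using N_meas j by blast
  show "(\<lambda>(w, t). hawkes_intensity M Phi N w j t) \<in> borel_measurable (Pr \<Otimes>\<^sub>M lborel)"
    using lam_meas j by blast
  show "A \<in> sets borel \<Longrightarrow> (\<integral>\<^sup>+ w. emeasure (N w j) A \<partial>Pr) =
      (\<integral>\<^sup>+ w. (\<integral>\<^sup>+ t\<in>A. hawkes_intensity M Phi N w j t \<partial>lborel) \<partial>Pr)"
    using intensity j by blast
  show "(\<integral>\<^sup>+ w. hawkes_intensity M Phi N w j t \<partial>Pr) = (\<integral>\<^sup>+ w. hawkes_intensity M Phi N w j 0 \<partial>Pr)"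
    using stationary j by blast
  show "(\<integral>\<^sup>+ w. hawkes_intensity M Phi N w j 0 \<partial>Pr) < \<infinity>"
    using finite_mean j by blast
qed (simp_all add: prob M_def)

theorem proposition2:
  fixes Pr :: "'w measure"
    and N :: "'w \<Rightarrow> nat \<Rightarrow> real measure"
    and \<mu> :: real
    and Ts Tc Fs Fc Is Ic Ns Nc :: "real \<Rightarrow> real"
  defines "M \<equiv> vec 4 (\<lambda>i. if i < 2 then \<mu> else 0)"
    and "Phi \<equiv> Phi_mat Ts Tc Fs Fc Is Ic Ns Nc"
    and "lam \<equiv> hawkes_intensity (vec 4 (\<lambda>i. if i < 2 then \<mu> else 0))
                    (Phi_mat Ts Tc Fs Fc Is Ic Ns Nc) N"
  assumes prob: "prob_space Pr"
    and mu_pos: "\<mu> > 0"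
    and kernels: "\<forall>f \<in> {Ts, Tc, Fs, Fc, Is, Ic, Ns, Nc}.
        f \<in> borel_measurable borel \<and> (\<forall>t. 0 \<le> f t) \<and> (\<forall>t < 0. f t = 0) \<and> integrable lborel f"
    and eig: "\<forall>c. eigenvalue (map_mat complex_of_real (fhat0 4 Phi)) c \<longrightarrow> cmod c < 1"
    and N_sets: "\<forall>w j. j < 4 \<longrightarrow> sets (N w j) = sets borel"
    and N_counting: "\<forall>w j (a::real) b. j < 4 \<longrightarrow> emeasure (N w j) {a..b} \<in> range of_nat"
    and N_meas: "\<forall>j < 4. \<forall>A \<in> sets borel. (\<lambda>w. emeasure (N w j) A) \<in> borel_measurable Pr"
    and lam_meas: "\<forall>i < 4. (\<lambda>(w, t). lam w i t) \<in> borel_measurable (Pr \<Otimes>\<^sub>M lborel)"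
    and intensity: "\<forall>i < 4. \<forall>A \<in> sets borel.
        (\<integral>\<^sup>+ w. emeasure (N w i) A \<partial>Pr) = (\<integral>\<^sup>+ w. (\<integral>\<^sup>+ t\<in>A. lam w i t \<partial>lborel) \<partial>Pr)"
    and stationary: "\<forall>i < 4. \<forall>t. (\<integral>\<^sup>+ w. lam w i t \<partial>Pr) = (\<integral>\<^sup>+ w. lam w i 0 \<partial>Pr)"
    and finite_mean: "\<forall>i < 4. (\<integral>\<^sup>+ w. lam w i 0 \<partial>Pr) < \<infinity>"
  shows "let Lam = vec 4 (\<lambda>i. enn2real (\<integral>\<^sup>+ w. lam w i 0 \<partial>Pr));
             PhiT = fhat0 2 (\<lambda>t. blk2 (Ts t) (Tc t));
             PhiF = fhat0 2 (\<lambda>t. blk2 (Fs t) (Fc t));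
             PhiI = fhat0 2 (\<lambda>t. blk2 (Is t) (Ic t));
             PhiN = fhat0 2 (\<lambda>t. blk2 (Ns t) (Nc t));
             v = vec 2 (\<lambda>_. 1 :: real)
         in (\<exists>B. mat_inverse (1\<^sub>m 4 - fhat0 4 Phi) = Some B \<and> Lam = B *\<^sub>v M)
          \<and> (\<exists>C. mat_inverse ((1\<^sub>m 2 - PhiT) * (1\<^sub>m 2 - PhiN) - PhiF * PhiI) = Some C \<and>
               (let D = C - 1\<^sub>m 2 in
                  vec 2 (\<lambda>i. Lam $ i) = \<mu> \<cdot>\<^sub>v (((1\<^sub>m 2 + D) * (1\<^sub>m 2 - PhiN)) *\<^sub>v v)
                \<and> vec 2 (\<lambda>i. Lam $ (i + 2)) = \<mu> \<cdot>\<^sub>v (((1\<^sub>m 2 + D) * PhiI) *\<^sub>v v)))"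
proof -
  \<comment> \<open>Only first moments enter the argument.\<close>
  interpret stationary_hawkes Pr N M Phi
    using stationary_hawkes_Phi_mat[OF prob mu_pos kernels N_sets N_meas] lam_meas intensity stationary
      finite_mean
    unfolding M_def Phi_def lam_def by blast
  have "\<not> eigenvalue (fhat0 4 Phi) 1"
    using eig of_real_hom.eigenvalue_hom[of "fhat0 4 Phi" 4 1] by (auto simp: fhat0_def)
  then have det: "det (1\<^sub>m 4 - fhat0 4 Phi) \<noteq> 0"
    by (intro det_one_minus_neq_0) (simp add: fhat0_def)
  let ?blk = "\<lambda>f g. blk2 (integral\<^sup>L lborel f) (integral\<^sup>L lborel g)"
  have blocks: "fhat0 4 Phi = four_block_mat (?blk Ts Tc) (?blk Fs Fc) (?blk Is Ic) (?blk Ns Nc)"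
    unfolding Phi_def fhat0_Phi_mat fhat0_blk2 ..
  have Lam: "mean_intensity \<in> carrier_vec 4"
    by (simp add: mean_intensity_def)
  obtain B C where B: "mat_inverse (1\<^sub>m 4 - fhat0 4 Phi) = Some B" "mean_intensity = B *\<^sub>v M"
    and C: "mat_inverse ((1\<^sub>m 2 - ?blk Ts Tc) * (1\<^sub>m 2 - ?blk Ns Nc) - ?blk Fs Fc * ?blk Is Ic) = Some C"
      "C \<in> carrier_mat 2 2"
      "vec 2 (\<lambda>i. mean_intensity $ i) = \<mu> \<cdot>\<^sub>v ((C * (1\<^sub>m 2 - ?blk Ns Nc)) *\<^sub>v vec 2 (\<lambda>_. 1))"
      "vec 2 (\<lambda>i. mean_intensity $ (i + 2)) = \<mu> \<cdot>\<^sub>v ((C * ?blk Is Ic) *\<^sub>v vec 2 (\<lambda>_. 1))"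
    by (rule blk2_block_mean_solution[OF det[unfolded blocks] Lam[unfolded M_def]
          mean_intensity_equation[unfolded blocks M_def], folded M_def blocks])
  have "1\<^sub>m 2 + (C - 1\<^sub>m 2) = C"
    using C(2) by (intro eq_matI) auto
  moreover have "vec 4 (\<lambda>i. enn2real (\<integral>\<^sup>+ w. lam w i 0 \<partial>Pr)) = mean_intensity"
    unfolding mean_intensity_def unfolding lam_def M_def Phi_def ..
  ultimately show ?thesis
    using B C unfolding Let_def fhat0_blk2 by auto
qed

end
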